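(* Let $V=\{v_1,\dots,v_n\}$ be a finite set with $n\geq 2$, let $d$ be a monotone and consistent symmetric set function on $V$, let $\tau\in\mathbb{R}$, and let $v_1,\dots,v_n$ be a lax-back order with threshold $\tau$ for $(V,d)$. Then $$\min\{\tau, d(\{v_n\},V\setminus\{v_n\})\}=\min\{\tau,\lambda_{(V,d)}(v_n,v_{n-1})\}.$$
   Context: A symmetric set function $d$ on a finite set $V$ assigns a real number $d(S,T)$ to every ordered pair $(S,T)$ of disjoint subsets of $V$, such that $d(S,T)=d(T,S)$. It is monotone if $d(S,T')\leq d(S,T)$ whenever $S,T$ are disjoint and $T'\subseteq T$; consistent if for all pairwise disjoint $R,S,T$, $d(S,R)\geq d(T,R)$ implies $d(S,R\cup T)\geq d(S\cup R,T)$. For $s,t\in V$, $\lambda_{(V,d)}(s,t)=\min\{d(S,V\setminus S)\mid s\in S\subseteq V,\ t\notin S\}$. Singletons $\{v\}$ may be written $v$. An ordering $v_1,\dots,v_n$ of $V$ is a lax-back order with threshold $\tau$ for $(V,d)$ if $\min\{\tau,d(v_i,\{v_1,\dots,v_{i-1}\})\}\geq\min\{\tau,d(v_j,\{v_1,\dots,v_{i-1}\})\}$ for all $1\leq i<j\leq n$. *)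

theory Defs
  imports Main "HOL.Real"
begin

text \<open>A set function on a finite ground set V: values d S T for disjoint S, T \<subseteq> V.
  Values outside this domain are irrelevant.\<close>

definition symmetric_set_function :: "'a set \<Rightarrow> ('a set \<Rightarrow> 'a set \<Rightarrow> real) \<Rightarrow> bool" where
  "symmetric_set_function V d \<longleftrightarrow>
     (\<forall>S T. S \<subseteq> V \<longrightarrow> T \<subseteq> V \<longrightarrow> S \<inter> T = {} \<longrightarrow> d S T = d T S)"

definition monotone_sf :: "'a set \<Rightarrow> ('a set \<Rightarrow> 'a set \<Rightarrow> real) \<Rightarrow> bool" where
  "monotone_sf V d \<longleftrightarrow>
     (\<forall>S T T'. S \<subseteq> V \<longrightarrow> T \<subseteq> V \<longrightarrow> S \<inter> T = {} \<longrightarrow> T' \<subseteq> T \<longrightarrow> d S T' \<le> d S T)"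

definition consistent_sf :: "'a set \<Rightarrow> ('a set \<Rightarrow> 'a set \<Rightarrow> real) \<Rightarrow> bool" where
  "consistent_sf V d \<longleftrightarrow>
     (\<forall>R S T. R \<subseteq> V \<longrightarrow> S \<subseteq> V \<longrightarrow> T \<subseteq> V \<longrightarrow>
        R \<inter> S = {} \<longrightarrow> R \<inter> T = {} \<longrightarrow> S \<inter> T = {} \<longrightarrow>
        d S R \<ge> d T R \<longrightarrow> d S (R \<union> T) \<ge> d (S \<union> R) T)"

definition lambda_sf :: "'a set \<Rightarrow> ('a set \<Rightarrow> 'a set \<Rightarrow> real) \<Rightarrow> 'a \<Rightarrow> 'a \<Rightarrow> real" where
  "lambda_sf V d s t = Min {d S (V - S) | S. s \<in> S \<and> S \<subseteq> V \<and> t \<notin> S}"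

text \<open>Ordering v_1..v_n given as a list vs (0-indexed: vs ! 0 = v_1).
  Prefix {v_1,...,v_{i-1}} for 1-indexed i corresponds to set (take i vs) for 0-indexed i.\<close>

definition lax_back_order :: "'a set \<Rightarrow> ('a set \<Rightarrow> 'a set \<Rightarrow> real) \<Rightarrow> real \<Rightarrow> 'a list \<Rightarrow> bool" where
  "lax_back_order V d \<tau> vs \<longleftrightarrow> distinct vs \<and> set vs = V \<and>
     (\<forall>i j. i < j \<longrightarrow> j < length vs \<longrightarrow>
        min \<tau> (d {vs ! i} (set (take i vs))) \<ge> min \<tau> (d {vs ! j} (set (take i vs))))"

end

theory Submission
  imports Defs
begin

text \<open>Call k a crossing of S if v_k and v_(k-1) lie on different sides of S, and let P_k be
  the prefix before v_k. By induction over the crossings, min(\<tau>, d(v_k, P_k)) is at most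
  min(\<tau>, d) of the cut that S induces on P_k + v_k. In the step from the previous crossing i
  to k, consistency adds v_k to its side of the cut, and the lax-back condition at step i
  compares d(v_k, P_i) with d(v_i, P_i). Every S separating the last two vertices crosses at
  the last vertex v_n, so min(\<tau>, d(S, V - S)) \<ge> min(\<tau>, d(v_n, V - v_n)), and {v_n} is
  itself such an S.\<close>

lemma symmetric_set_functionD:
  "symmetric_set_function V d \<Longrightarrow> S \<subseteq> V \<Longrightarrow> T \<subseteq> V \<Longrightarrow> S \<inter> T = {} \<Longrightarrow> d S T = d T S"
  unfolding symmetric_set_function_def by blast

lemma monotone_sfD:
  "monotone_sf V d \<Longrightarrow> S \<subseteq> V \<Longrightarrow> T \<subseteq> V \<Longrightarrow> S \<inter> T = {} \<Longrightarrow> T' \<subseteq> T \<Longrightarrow> d S T' \<le> d S T"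
  unfolding monotone_sf_def by blast

lemma consistent_sfD:
  "consistent_sf V d \<Longrightarrow> R \<subseteq> V \<Longrightarrow> S \<subseteq> V \<Longrightarrow> T \<subseteq> V \<Longrightarrow>
    R \<inter> S = {} \<Longrightarrow> R \<inter> T = {} \<Longrightarrow> S \<inter> T = {} \<Longrightarrow>
    d T R \<le> d S R \<Longrightarrow> d (S \<union> R) T \<le> d S (R \<union> T)"
  unfolding consistent_sf_def by blast

lemma in_set_take_iff_nth:
  "k \<le> length xs \<Longrightarrow> x \<in> set (take k xs) \<longleftrightarrow> (\<exists>j<k. x = xs ! j)"
  by (auto simp: nth_image[symmetric])

lemma set_take_Suc_nth:
  "k < length xs \<Longrightarrow> set (take (Suc k) xs) = insert (xs ! k) (set (take k xs))"
  by (simp add: take_Suc_conv_app_nth)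

lemma nth_notin_set_take:
  "distinct xs \<Longrightarrow> k < length xs \<Longrightarrow> xs ! k \<notin> set (take k xs)"
  by (auto simp: in_set_take_iff_nth nth_eq_iff_index_eq)

lemma consistent_extend_cut:
  assumes sym: "symmetric_set_function V d" and mono: "monotone_sf V d"
    and cons: "consistent_sf V d"
    and sub: "W \<subseteq> V" "Z \<subseteq> V" "v \<in> V" "X \<subseteq> W" "Y \<subseteq> Z"
    and disj: "W \<inter> Y = {}" "v \<notin> W" "v \<notin> Z"
    and le: "min \<tau> (d {v} Z) \<le> min \<tau> (d X Y)"
  shows "min \<tau> (d {v} (W \<union> Y)) \<le> min \<tau> (d (insert v Y) W)"
proof -
  have Y: "Y \<subseteq> V" "v \<notin> Y" using sub disj by auto
  have swap: "d (insert v Y) W = d W (Y \<union> {v})"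
    by (subst symmetric_set_functionD[OF sym]) (use sub Y disj in auto)
  show ?thesis
  proof (cases "d {v} Y \<le> d W Y")
    case True
    then have "d (W \<union> Y) {v} \<le> d W (Y \<union> {v})"
      by (intro consistent_sfD[OF cons]) (use sub Y disj in auto)
    moreover have "d (W \<union> Y) {v} = d {v} (W \<union> Y)"
      by (rule symmetric_set_functionD[OF sym]) (use sub Y disj in auto)
    ultimately show ?thesis using swap by (simp add: min_def)
  next
    case False
    \<comment> \<open>then d(W, Y) is at least \<tau>, and so is d(W, Y + v)\<close>
    have "d {v} Y \<le> d {v} Z"
      by (rule monotone_sfD[OF mono]) (use sub disj in auto)
    moreover have "d X Y \<le> d W Y"
    proof -
      have "d X Y = d Y X"
        by (rule symmetric_set_functionD[OF sym]) (use sub Y disj in auto)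
      also have "\<dots> \<le> d Y W"
        by (rule monotone_sfD[OF mono]) (use sub Y disj in auto)
      also have "\<dots> = d W Y"
        by (rule symmetric_set_functionD[OF sym]) (use sub Y disj in auto)
      finally show ?thesis .
    qed
    moreover have "d W Y \<le> d W (Y \<union> {v})"
      by (rule monotone_sfD[OF mono]) (use sub Y disj in auto)
    ultimately show ?thesis using False le swap by (simp add: min_def split: if_splits)
  qed
qed

lemma lax_back_order_cut_bound:
  assumes sym: "symmetric_set_function V d" and mono: "monotone_sf V d"
    and cons: "consistent_sf V d" and lax: "lax_back_order V d \<tau> vs"
    and "k < length vs" "0 < k" "vs ! k \<in> S" "vs ! (k - 1) \<notin> S"
  shows "min \<tau> (d {vs ! k} (set (take k vs)))
    \<le> min \<tau> (d (set (take (Suc k) vs) \<inter> S) (set (take (Suc k) vs) - S))"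
  using assms(5-)
proof (induction k arbitrary: S rule: less_induct)
  case (less k)
  let ?P = "\<lambda>m. set (take m vs)"
  have dist: "distinct vs" and setV: "set vs = V"
    and ord: "\<And>i j. i < j \<Longrightarrow> j < length vs \<Longrightarrow>
        min \<tau> (d {vs ! j} (?P i)) \<le> min \<tau> (d {vs ! i} (?P i))"
    using lax unfolding lax_back_order_def by auto
  have PV: "?P m \<subseteq> V" for m using setV set_take_subset by metis
  have Pk: "?P (Suc k) = insert (vs ! k) (?P k)" "vs ! k \<notin> ?P k"
    using less.prems dist by (simp_all add: set_take_Suc_nth nth_notin_set_take)
  define J where "J = {j. j < k \<and> vs ! j \<in> S}"
  have "finite J" unfolding J_def by simp
  show ?case
  proof (cases "J = {}")
    case True
    then have "?P k \<inter> S = {}"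
      using less.prems by (auto simp: in_set_take_iff_nth J_def)
    then have "?P (Suc k) \<inter> S = {vs ! k}" "?P (Suc k) - S = ?P k"
      using Pk less.prems by auto
    then show ?thesis by simp
  next
    case False
    \<comment> \<open>the previous crossing of S: v_i is the first vertex of the final run outside S\<close>
    define i where "i = Suc (Max J)"
    have "Max J \<in> J" using False \<open>finite J\<close> by simp
    moreover have "Max J \<noteq> k - 1"
      using \<open>Max J \<in> J\<close> less.prems unfolding J_def by auto
    ultimately have i: "0 < i" "i < k" "vs ! (i - 1) \<in> S"
      unfolding i_def J_def by auto
    have below_i: "j < i" if "j < k" "vs ! j \<in> S" for j
      using that \<open>finite J\<close> unfolding i_def J_def by (simp add: le_imp_less_Suc)
    have "vs ! i \<notin> S"
      using below_i[of i] i by auto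
    have Pi: "?P (Suc i) = insert (vs ! i) (?P i)"
      using i less.prems by (simp add: set_take_Suc_nth)
    have "?P (Suc i) \<inter> - S = ?P (Suc i) - S" "?P (Suc i) - - S = ?P i \<inter> S"
      using Pi \<open>vs ! i \<notin> S\<close> by auto
    then have "min \<tau> (d {vs ! i} (?P i)) \<le> min \<tau> (d (?P (Suc i) - S) (?P i \<inter> S))"
      using less.IH[of i "- S"] i \<open>vs ! i \<notin> S\<close> less.prems by auto
    moreover have "min \<tau> (d {vs ! k} (?P i)) \<le> min \<tau> (d {vs ! i} (?P i))"
      using ord i less.prems by blast
    ultimately have le: "min \<tau> (d {vs ! k} (?P i)) \<le> min \<tau> (d (?P (Suc i) - S) (?P i \<inter> S))"
      by linarith
    have "?P k \<inter> S \<subseteq> ?P i"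
    proof
      fix x assume "x \<in> ?P k \<inter> S"
      then obtain j where "j < k" "x = vs ! j" "x \<in> S"
        using less.prems by (auto simp: in_set_take_iff_nth)
      then have "j < i" using below_i by blast
      then show "x \<in> ?P i" using \<open>x = vs ! j\<close> i less.prems
        by (auto simp: in_set_take_iff_nth)
    qed
    then have "?P k - S \<union> ?P i \<inter> S = ?P k"
      using set_take_subset_set_take[of i k vs] i by auto
    moreover have "?P (Suc k) \<inter> S = insert (vs ! k) (?P i \<inter> S)" "?P (Suc k) - S = ?P k - S"
      using Pk \<open>?P k \<inter> S \<subseteq> ?P i\<close> set_take_subset_set_take[of i k vs] i less.prems
      by auto
    moreover have "min \<tau> (d {vs ! k} (?P k - S \<union> ?P i \<inter> S))
        \<le> min \<tau> (d (insert (vs ! k) (?P i \<inter> S)) (?P k - S))"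
    proof (rule consistent_extend_cut[OF sym mono cons _ _ _ _ _ _ _ _ le])
      show "?P k - S \<subseteq> V" "?P i \<subseteq> V" using PV by blast+
      show "vs ! k \<in> V" using setV less.prems by auto
      show "?P (Suc i) - S \<subseteq> ?P k - S"
        using set_take_subset_set_take[of "Suc i" k vs] i by auto
      show "vs ! k \<notin> ?P k - S" using Pk by blast
      show "vs ! k \<notin> ?P i"
        using Pk set_take_subset_set_take[of i k vs] i by auto
    qed auto
    ultimately show ?thesis by simp
  qed
qed

lemma lax_back_order_last_cut_bound:
  assumes sym: "symmetric_set_function V d" and mono: "monotone_sf V d"
    and cons: "consistent_sf V d" and lax: "lax_back_order V d \<tau> vs"
    and "2 \<le> length vs" "S \<subseteq> V"
    and "vs ! (length vs - 1) \<in> S" "vs ! (length vs - 2) \<notin> S"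
  shows "min \<tau> (d {vs ! (length vs - 1)} (V - {vs ! (length vs - 1)})) \<le> min \<tau> (d S (V - S))"
proof -
  define k where "k = length vs - 1"
  have dist: "distinct vs" and setV: "set vs = V"
    using lax unfolding lax_back_order_def by auto
  have k: "k < length vs" "0 < k" "k - 1 = length vs - 2"
    using assms(5) unfolding k_def by auto
  have "set (take (Suc k) vs) = V"
    using k setV by (simp add: Suc_leI k_def)
  moreover have "set (take k vs) = V - {vs ! k}"
    using calculation set_take_Suc_nth[OF k(1)] nth_notin_set_take[OF dist k(1)] by auto
  ultimately show ?thesis
    using lax_back_order_cut_bound[OF sym mono cons lax k(1,2), of S] assms(6-8) k
    unfolding k_def by (simp add: Int_absorb1)
qed

lemma min_Min_eq_if_min_bound:
  fixes L :: "real set"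
  assumes "finite L" "a \<in> L" "\<And>x. x \<in> L \<Longrightarrow> min \<tau> a \<le> min \<tau> x"
  shows "min \<tau> a = min \<tau> (Min L)"
proof -
  have "Min L \<in> L" "Min L \<le> a" using assms(1,2) by (auto intro: Min_in)
  then show ?thesis using assms(3)[of "Min L"] by (simp add: min_def split: if_splits)
qed

theorem corollary1:
  fixes V :: "'a set" and d :: "'a set \<Rightarrow> 'a set \<Rightarrow> real" and \<tau> :: real and vs :: "'a list"
  assumes "finite V"
    and "card V \<ge> 2"
    and "symmetric_set_function V d"
    and "monotone_sf V d"
    and "consistent_sf V d"
    and "lax_back_order V d \<tau> vs"
  shows "min \<tau> (d {vs ! (length vs - 1)} (V - {vs ! (length vs - 1)}))
       = min \<tau> (lambda_sf V d (vs ! (length vs - 1)) (vs ! (length vs - 2)))"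
proof -
  define t where "t = vs ! (length vs - 1)"
  define s where "s = vs ! (length vs - 2)"
  have dist: "distinct vs" and setV: "set vs = V"
    using assms(6) unfolding lax_back_order_def by auto
  have n: "2 \<le> length vs" using assms(2) distinct_card[OF dist] setV by simp
  then have "t \<in> V" "s \<noteq> t"
    using setV nth_eq_iff_index_eq[OF dist, of "length vs - 2" "length vs - 1"]
    unfolding s_def t_def by auto
  define L where "L = {d S (V - S) | S. t \<in> S \<and> S \<subseteq> V \<and> s \<notin> S}"
  have "finite L" unfolding L_def
    by (rule finite_subset[of _ "(\<lambda>S. d S (V - S)) ` Pow V"]) (use assms(1) in auto)
  moreover have "d {t} (V - {t}) \<in> L"
    unfolding L_def using \<open>t \<in> V\<close> \<open>s \<noteq> t\<close> by auto
  moreover have "min \<tau> (d {t} (V - {t})) \<le> min \<tau> x" if "x \<in> L" for x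
    using that lax_back_order_last_cut_bound[OF assms(3-6) n]
    unfolding L_def s_def t_def by auto
  ultimately have "min \<tau> (d {t} (V - {t})) = min \<tau> (Min L)"
    by (rule min_Min_eq_if_min_bound)
  then show ?thesis unfolding lambda_sf_def L_def t_def s_def .
qed

end
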